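(* Let $n_0, n_1$ be positive integers and consider fixed (nonrandom) matrices $\mathbf{Z}_0 \in \mathbb{R}^{n_0\times m_0}$, $\mathbf{X}_0 \in \mathbb{R}^{n_0\times k}$, $\mathbf{W}_1 \in \mathbb{R}^{n_1\times k_1}$, $\mathbf{X}_1 \in \mathbb{R}^{n_1\times k}$, where the columns of $\mathbf{X}_0$ and $\mathbf{X}_1$ correspond to the same predictors in the same order, $\mathbf{Z}_0^{\prime}\mathbf{Z}_0$ and $\mathbf{W}_1^{\prime}\mathbf{W}_1$ are invertible, and $\tilde{\mathbf{X}}_0^{\prime}\tilde{\mathbf{X}}_0$ is invertible, where $$\mathbf{M}_0 = \mathbf{I} - \mathbf{Z}_0(\mathbf{Z}_0^{\prime}\mathbf{Z}_0)^{-1}\mathbf{Z}_0^{\prime},\quad \tilde{\mathbf{X}}_0 = \mathbf{M}_0\mathbf{X}_0,\quad \mathbf{M}_1 = \mathbf{I} - \mathbf{W}_1(\mathbf{W}_1^{\prime}\mathbf{W}_1)^{-1}\mathbf{W}_1^{\prime},\quad \tilde{\mathbf{X}}_1 = \mathbf{M}_1\mathbf{X}_1.$$ Consider the model $$\mathbf{y}_0 = \mathbf{Z}_0\boldsymbol{\alpha}_0 + \mathbf{X}_0\boldsymbol{\beta}_0 + \boldsymbol{\epsilon}_0,\qquad \mathbf{y}_1 = \mathbf{W}_1\boldsymbol{\alpha}_1 + \mathbf{X}_1\boldsymbol{\beta}_1 + \boldsymbol{\epsilon}_1,\qquad \boldsymbol{\beta}_1 = \boldsymbol{\beta}_0 +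 \boldsymbol{\eta},$$ where $\boldsymbol{\alpha}_0,\boldsymbol{\alpha}_1,\boldsymbol{\beta}_0$ are fixed, $\boldsymbol{\epsilon}_j$ ($j=0,1$) is a random vector with mean $\mathbf{0}$ and covariance $\sigma_j^2\mathbf{I}_{n_j}$, $\boldsymbol{\eta}$ is a random vector with mean $\mathbf{0}$ and covariance $\sigma_\eta^2\mathbf{I}_k$, and $\boldsymbol{\epsilon}_0,\boldsymbol{\epsilon}_1,\boldsymbol{\eta}$ are mutually independent. Define the prediction $$\hat{\mathbf{y}}_{1\mid 0} = \mathbf{W}_1\hat{\boldsymbol{\alpha}}_1 + \mathbf{X}_1\hat{\boldsymbol{\beta}}_0,\quad \hat{\boldsymbol{\beta}}_0 = (\tilde{\mathbf{X}}_0^{\prime}\tilde{\mathbf{X}}_0)^{-1}\tilde{\mathbf{X}}_0^{\prime}\mathbf{y}_0,\quad \hat{\boldsymbol{\alpha}}_1 = (\mathbf{W}_1^{\prime}\mathbf{W}_1)^{-1}\mathbf{W}_1^{\prime}(\mathbf{y}_1 - \mathbf{X}_1\hat{\boldsymbol{\beta}}_0).$$ Then $$\frac{1}{n_1}E\left[(\mathbf{y}_1 - \hat{\mathbf{y}}_{1\mid 0})^{\prime}(\mathbf{y}_1 - \hat{\mathbf{y}}_{1\mid 0})\right] = \frac{n_1 - k_1}{n_1}\sigma_1^2 + \frac{\sigma_\eta^2}{n_1}\operatorname{tr}\left(\tilde{\mathbf{X}}_1^{\prime}\tilde{\mathbf{X}}_1\right) + \frac{\sigma_0^2}{n_1}\operatorname{tr}\left\{(\tilde{\mathbf{X}}_0^{\prime}\tilde{\mathbf{X}}_0)^{-1}\tilde{\mathbf{X}}_1^{\prime}\tilde{\mathbf{X}}_1\right\},$$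 where $k_1$ is the number of predictors (columns) in $\mathbf{W}_1$.
   Context: Two datasets indexed by disjoint index sets $\mathcal{S}_0,\mathcal{S}_1$ with $n_j = |\mathcal{S}_j|$; $\mathbf{y}_j$ stacks the responses of dataset $j$. $\mathbf{X}_0,\mathbf{X}_1$ contain the predictors common to both datasets (with random coefficients linked by $\boldsymbol{\eta}$), while $\mathbf{Z}_0$ and $\mathbf{W}_1$ contain dataset-specific predictors with unrestricted coefficients. The expectation is over $\boldsymbol{\epsilon}_0,\boldsymbol{\epsilon}_1,\boldsymbol{\eta}$ with the design matrices held fixed. *)

theory Defs
  imports "HOL-Probability.Probability"
begin

definition resid_maker :: "real^'m^'n \<Rightarrow> real^'n^'n" where
  "resid_maker Z = mat 1 - Z ** matrix_inv (transpose Z ** Z) ** transpose Z"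

definition white_noise :: "'a measure \<Rightarrow> ('a \<Rightarrow> real^'n) \<Rightarrow> real \<Rightarrow> bool" where
  "white_noise M e s \<longleftrightarrow>
     (\<forall>i. integrable M (\<lambda>w. e w $ i) \<and> integral\<^sup>L M (\<lambda>w. e w $ i) = 0) \<and>
     (\<forall>i j. integrable M (\<lambda>w. e w $ i * e w $ j) \<and>
            integral\<^sup>L M (\<lambda>w. e w $ i * e w $ j) = (if i = j then s\<^sup>2 else 0))"

definition gen_sigma :: "'a measure \<Rightarrow> ('a \<Rightarrow> 'b::topological_space) \<Rightarrow> 'a set set" where
  "gen_sigma M X = sigma_sets (space M) {X -` A \<inter> space M | A. A \<in> sets borel}"

text \<open>Mutual independence of three random variables with possibly different codomains
  (the unfolded form of indep_vars, which needs a common codomain type).\<close>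
definition indep3 :: "'a measure \<Rightarrow> ('a \<Rightarrow> 'b::topological_space) \<Rightarrow> ('a \<Rightarrow> 'c::topological_space)
    \<Rightarrow> ('a \<Rightarrow> 'd::topological_space) \<Rightarrow> bool" where
  "indep3 M X Y Z \<longleftrightarrow>
     X \<in> borel_measurable M \<and> Y \<in> borel_measurable M \<and> Z \<in> borel_measurable M \<and>
     prob_space.indep_sets M
       (\<lambda>i::nat. if i = 0 then gen_sigma M X else if i = 1 then gen_sigma M Y else gen_sigma M Z)
       {0, 1, 2}"

end

theory Submission
  imports Defs
begin

text \<open>Let \<open>A = (Xt\<^sub>0'Xt\<^sub>0)\<^sup>-\<^sup>1Xt\<^sub>0'\<close>.  Since \<open>A Z\<^sub>0 = 0\<close> and \<open>A X\<^sub>0 = I\<close>, the estimate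
  is \<open>\<beta>hat\<^sub>0 = \<beta>\<^sub>0 + A\<epsilon>\<^sub>0\<close>.  Refitting \<open>\<alpha>\<^sub>1\<close> turns the prediction error into
  \<open>M\<^sub>1(y\<^sub>1 - X\<^sub>1\<beta>hat\<^sub>0)\<close>, and as \<open>M\<^sub>1W\<^sub>1 = 0\<close> this is \<open>Xt\<^sub>1\<eta> + M\<^sub>1\<epsilon>\<^sub>1 - Xt\<^sub>1A\<epsilon>\<^sub>0\<close>, a sum
  of linear images \<open>B\<^sub>j e\<^sub>j\<close> of three independent white noises.  The expected squared norm of
  such a sum is \<open>\<Sum>\<^sub>j \<sigma>\<^sub>j\<^sup>2 tr(B\<^sub>j'B\<^sub>j)\<close>, the cross terms vanishing by independence, and the
  traces simplify because \<open>M\<^sub>1\<close> is a symmetric idempotent of trace \<open>n\<^sub>1 - k\<^sub>1\<close> and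
  \<open>AA' = (Xt\<^sub>0'Xt\<^sub>0)\<^sup>-\<^sup>1\<close>.\<close>

lemma matrix_diff_ldistrib: "(A::'a::ring_1^'n^'m) ** (B - C) = A ** B - A ** C"
  by (simp add: matrix_matrix_mult_def vec_eq_iff sum_subtractf algebra_simps)

lemma matrix_diff_rdistrib: "((A::'a::ring_1^'n^'m) - B) ** C = A ** C - B ** C"
  by (simp add: matrix_matrix_mult_def vec_eq_iff sum_subtractf algebra_simps)

lemma transpose_diff: "transpose ((A::'a::ring_1^'n^'m) - B) = transpose A - transpose B"
  by (simp add: transpose_def vec_eq_iff)

lemma matrix_vector_mult_uminus_left: "(- (A::'a::ring_1^'n^'m)) *v x = - (A *v x)"
  by (simp add: matrix_vector_mult_def vec_eq_iff sum_negf)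

lemma transpose_uminus_mult_self:
  "transpose (- (A::'a::comm_ring_1^'n^'m)) ** (- A) = transpose A ** A"
  by (simp add: matrix_matrix_mult_def transpose_def vec_eq_iff)

lemma
  fixes A :: "'a::semiring_1^'n^'n"
  assumes "invertible A"
  shows matrix_inv_right: "A ** matrix_inv A = mat 1"
    and matrix_inv_left: "matrix_inv A ** A = mat 1"
  using someI_ex[OF assms[unfolded invertible_def]] unfolding matrix_inv_def by auto

lemma transpose_matrix_inv_symmetric:
  fixes G :: "'a::comm_semiring_1^'n^'n"
  assumes "invertible G" "transpose G = G"
  shows "transpose (matrix_inv G) = matrix_inv G"
proof -
  have left_inverse: "transpose (matrix_inv G) ** G = mat 1"
    by (metis assms matrix_transpose_mul matrix_inv_right transpose_mat)
  have "transpose (matrix_inv G) = transpose (matrix_inv G) ** (G ** matrix_inv G)"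
    by (simp add: matrix_inv_right[OF assms(1)])
  also have "\<dots> = matrix_inv G"
    by (simp add: matrix_mul_assoc left_inverse)
  finally show ?thesis .
qed

lemma transpose_gram [simp]: "transpose (transpose A ** A) = transpose A ** (A::'a::comm_semiring_1^'n^'m)"
  by (simp add: matrix_transpose_mul)

lemma trace_transpose_mult_self_mult:
  fixes B :: "'a::comm_semiring_1^'n^'m" and A :: "'a^'p^'n"
  shows "trace (transpose (B ** A) ** (B ** A)) = trace ((A ** transpose A) ** (transpose B ** B))"
proof -
  have "trace (transpose (B ** A) ** (B ** A)) = trace (transpose A ** ((transpose B ** B) ** A))"
    by (simp add: matrix_transpose_mul matrix_mul_assoc)
  also have "\<dots> = trace (((transpose B ** B) ** A) ** transpose A)"
    by (rule trace_mul_sym)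
  also have "\<dots> = trace ((A ** transpose A) ** (transpose B ** B))"
    by (metis matrix_mul_assoc trace_mul_sym)
  finally show ?thesis .
qed

lemma resid_maker_mult_vector:
  "resid_maker W *v u = u - W *v ((matrix_inv (transpose W ** W) ** transpose W) *v u)"
  unfolding resid_maker_def
  by (simp add: matrix_vector_mult_diff_rdistrib matrix_vector_mul_assoc matrix_mul_assoc)

context
  fixes Z :: "real^'m^'n"
  assumes gram_invertible: "invertible (transpose Z ** Z)"
begin

lemma resid_maker_symmetric: "transpose (resid_maker Z) = resid_maker Z"
  by (simp add: resid_maker_def transpose_diff matrix_transpose_mul matrix_mul_assoc
      transpose_matrix_inv_symmetric[OF gram_invertible])

lemma resid_maker_annihilates: "resid_maker Z ** Z = 0"
  by (simp add: resid_maker_def matrix_diff_rdistrib matrix_inv_left[OF gram_invertible]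
      flip: matrix_mul_assoc)

lemma resid_maker_idempotent: "resid_maker Z ** resid_maker Z = resid_maker Z"
  by (subst (2) resid_maker_def)
    (simp add: matrix_diff_ldistrib matrix_mul_assoc resid_maker_annihilates)

lemma trace_resid_maker: "trace (resid_maker Z) = real CARD('n) - real CARD('m)"
proof -
  have "trace (Z ** matrix_inv (transpose Z ** Z) ** transpose Z)
      = trace (matrix_inv (transpose Z ** Z) ** transpose Z ** Z)"
    by (metis matrix_mul_assoc trace_mul_sym)
  also have "\<dots> = real CARD('m)"
    by (simp add: matrix_inv_left[OF gram_invertible] trace_I flip: matrix_mul_assoc)
  finally show ?thesis
    by (simp add: resid_maker_def trace_sub trace_I)
qed

end

definition partial_ls_operator :: "real^'m^'n \<Rightarrow> real^'k^'n \<Rightarrow> real^'n^'k" where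
  "partial_ls_operator Z X =
     matrix_inv (transpose (resid_maker Z ** X) ** (resid_maker Z ** X)) ** transpose (resid_maker Z ** X)"

context
  fixes Z :: "real^'m^'n" and X :: "real^'k^'n"
  assumes gram_invertible: "invertible (transpose Z ** Z)"
    and partial_gram_invertible: "invertible (transpose (resid_maker Z ** X) ** (resid_maker Z ** X))"
begin

lemma transpose_partialled: "transpose (resid_maker Z ** X) = transpose X ** resid_maker Z"
  by (simp add: matrix_transpose_mul resid_maker_symmetric[OF gram_invertible])

lemma partial_ls_operator_annihilates: "partial_ls_operator Z X ** Z = 0"
  by (simp add: partial_ls_operator_def transpose_partialled
      resid_maker_annihilates[OF gram_invertible] flip: matrix_mul_assoc)

lemma partial_ls_operator_left_inverse: "partial_ls_operator Z X ** X = mat 1"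
proof -
  have "transpose (resid_maker Z ** X) ** X = transpose X ** (resid_maker Z ** resid_maker Z) ** X"
    by (simp add: transpose_partialled resid_maker_idempotent[OF gram_invertible])
  also have "\<dots> = transpose (resid_maker Z ** X) ** (resid_maker Z ** X)"
    by (simp add: transpose_partialled matrix_mul_assoc)
  finally show ?thesis
    by (simp add: partial_ls_operator_def matrix_inv_left[OF partial_gram_invertible]
        flip: matrix_mul_assoc)
qed

lemma partial_ls_operator_unbiased:
  "partial_ls_operator Z X *v (Z *v \<alpha> + X *v \<beta> + e) = \<beta> + partial_ls_operator Z X *v e"
  by (simp add: matrix_vector_right_distrib matrix_vector_mul_assoc
      partial_ls_operator_annihilates partial_ls_operator_left_inverse)

lemma partial_ls_operator_mult_transpose:
  "partial_ls_operator Z X ** transpose (partial_ls_operator Z X)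
     = matrix_inv (transpose (resid_maker Z ** X) ** (resid_maker Z ** X))"
    (is "_ = ?G")
proof -
  have "partial_ls_operator Z X ** transpose (partial_ls_operator Z X)
      = (?G ** (transpose (resid_maker Z ** X) ** (resid_maker Z ** X))) ** transpose ?G"
    by (simp add: partial_ls_operator_def matrix_transpose_mul matrix_mul_assoc)
  then show ?thesis
    by (simp add: matrix_inv_left[OF partial_gram_invertible]
        transpose_matrix_inv_symmetric[OF partial_gram_invertible])
qed

end

lemma refit_prediction_error:
  fixes W :: "real^'m^'n" and X :: "real^'k^'n" and \<alpha> :: "real^'m" and \<beta> h d :: "real^'k"
    and e :: "real^'n"
  assumes "invertible (transpose W ** W)"
  defines "y \<equiv> W *v \<alpha> + X *v (\<beta> + h) + e"
  shows "y - (W *v ((matrix_inv (transpose W ** W) ** transpose W) *v (y - X *v (\<beta> + d))) + X *v (\<beta> + d))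
    = (resid_maker W ** X) *v h + resid_maker W *v e - (resid_maker W ** X) *v d"
proof -
  have "y - (W *v ((matrix_inv (transpose W ** W) ** transpose W) *v (y - X *v (\<beta> + d))) + X *v (\<beta> + d))
      = resid_maker W *v (y - X *v (\<beta> + d))"
    by (simp add: resid_maker_mult_vector)
  also have "\<dots> = resid_maker W *v (W *v \<alpha> + X *v h + e - X *v d)"
    by (simp add: y_def matrix_vector_right_distrib algebra_simps)
  finally show ?thesis
    by (simp add: matrix_vector_right_distrib matrix_vector_mult_diff_distrib
        matrix_vector_mul_assoc resid_maker_annihilates[OF assms(1)])
qed

lemma inner_matrix_vector_mult_eq_sum:
  fixes B :: "real^'n^'m" and C :: "real^'p^'m"
  shows "(B *v x) \<bullet> (C *v y) = (\<Sum>j\<in>UNIV. \<Sum>l\<in>UNIV. (transpose B ** C) $ j $ l * (x $ j * y $ l))"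
proof -
  have "(B *v x) \<bullet> (C *v y) = (\<Sum>i\<in>UNIV. \<Sum>j\<in>UNIV. \<Sum>l\<in>UNIV. B $ i $ j * C $ i $ l * (x $ j * y $ l))"
    by (simp add: inner_vec_def matrix_vector_mult_def sum_product algebra_simps)
  also have "\<dots> = (\<Sum>j\<in>UNIV. \<Sum>i\<in>UNIV. \<Sum>l\<in>UNIV. B $ i $ j * C $ i $ l * (x $ j * y $ l))"
    by (rule sum.swap)
  also have "\<dots> = (\<Sum>j\<in>UNIV. \<Sum>l\<in>UNIV. \<Sum>i\<in>UNIV. B $ i $ j * C $ i $ l * (x $ j * y $ l))"
    by (intro sum.cong refl sum.swap)
  finally show ?thesis
    by (simp add: matrix_matrix_mult_def transpose_def sum_distrib_right)
qed

lemma has_bochner_integral_inner_matrix_vector_mult: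
  fixes B :: "real^'n^'m" and C :: "real^'p^'m" and e :: "'a \<Rightarrow> real^'n" and f :: "'a \<Rightarrow> real^'p"
  assumes "\<And>j l. has_bochner_integral M (\<lambda>w. e w $ j * f w $ l) (c j l)"
  shows "has_bochner_integral M (\<lambda>w. (B *v e w) \<bullet> (C *v f w))
           (\<Sum>j\<in>UNIV. \<Sum>l\<in>UNIV. (transpose B ** C) $ j $ l * c j l)"
  by (simp add: inner_matrix_vector_mult_eq_sum assms has_bochner_integral_sum
      has_bochner_integral_mult_right)

lemma has_bochner_integral_white_noise_product:
  assumes "white_noise M e s"
  shows "has_bochner_integral M (\<lambda>w. e w $ i * e w $ j) (if i = j then s\<^sup>2 else 0)"
  using assms by (simp add: white_noise_def has_bochner_integral_iff)

lemma has_bochner_integral_white_noise_quadratic_form: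
  assumes "white_noise M e s"
  shows "has_bochner_integral M (\<lambda>w. (B *v e w) \<bullet> (C *v e w)) (s\<^sup>2 * trace (transpose B ** C))"
proof -
  have "(\<Sum>j\<in>UNIV. \<Sum>l\<in>UNIV. (transpose B ** C) $ j $ l * (if j = l then s\<^sup>2 else 0))
      = s\<^sup>2 * trace (transpose B ** C)"
    by (simp add: trace_def sum_distrib_left mult.commute if_distrib cong: if_cong)
  then show ?thesis
    using has_bochner_integral_inner_matrix_vector_mult[of M e e "\<lambda>j l. if j = l then s\<^sup>2 else 0" B C]
    by (simp add: has_bochner_integral_white_noise_product[OF assms])
qed

definition indep2 :: "'a measure \<Rightarrow> ('a \<Rightarrow> 'b::topological_space) \<Rightarrow> ('a \<Rightarrow> 'c::topological_space) \<Rightarrow> bool"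
  where "indep2 M X Y \<longleftrightarrow>
    X \<in> borel_measurable M \<and> Y \<in> borel_measurable M \<and>
    prob_space.indep_set M (gen_sigma M X) (gen_sigma M Y)"

lemma gen_sigma_compose_subset:
  fixes X :: "'a \<Rightarrow> 'b::topological_space" and g :: "'b \<Rightarrow> 'c::topological_space"
  assumes "g \<in> borel_measurable borel"
  shows "gen_sigma M (\<lambda>w. g (X w)) \<subseteq> gen_sigma M X"
  unfolding gen_sigma_def
proof (rule sigma_sets_mono', safe)
  fix A :: "'c set" assume "A \<in> sets borel"
  then have "g -` A \<in> sets borel"
    using measurable_sets[OF assms] by simp
  moreover have "(\<lambda>w. g (X w)) -` A \<inter> space M = X -` (g -` A) \<inter> space M"
    by auto
  ultimately show "\<exists>B. (\<lambda>w. g (X w)) -` A \<inter> space M = X -` B \<inter> space M \<and> B \<in> sets borel"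
    by blast
qed

context prob_space
begin

lemma indep_var_compose_indep2:
  assumes "indep2 M X Y" "g \<in> borel_measurable borel" "h \<in> borel_measurable borel"
  shows "indep_var borel (\<lambda>w. g (X w)) borel (\<lambda>w. h (Y w))"
proof -
  have "indep_set (gen_sigma M (\<lambda>w. g (X w))) (gen_sigma M (\<lambda>w. h (Y w)))"
    using assms gen_sigma_compose_subset[OF assms(2), of M X]
      gen_sigma_compose_subset[OF assms(3), of M Y]
    unfolding indep2_def indep_sets2_eq by (meson order_trans subsetD)
  moreover have "random_variable borel (\<lambda>w. g (X w))" "random_variable borel (\<lambda>w. h (Y w))"
    using assms by (auto simp: indep2_def intro: measurable_compose)
  ultimately show ?thesis
    by (simp add: indep_var_eq flip: gen_sigma_def)
qed

lemma has_bochner_integral_indep_white_noise_product: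
  fixes e :: "'a \<Rightarrow> real^'n" and f :: "'a \<Rightarrow> real^'p"
  assumes "indep2 M e f" "white_noise M e s" "white_noise M f t"
  shows "has_bochner_integral M (\<lambda>w. e w $ j * f w $ l) 0"
proof -
  have "indep_var borel (\<lambda>w. e w $ j) borel (\<lambda>w. f w $ l)"
    by (rule indep_var_compose_indep2[OF assms(1)]) simp_all
  moreover have "integrable M (\<lambda>w. e w $ j)" "integral\<^sup>L M (\<lambda>w. e w $ j) = 0"
    "integrable M (\<lambda>w. f w $ l)"
    using assms(2,3) by (auto simp: white_noise_def)
  ultimately show ?thesis
    by (simp add: has_bochner_integral_iff indep_var_integrable indep_var_lebesgue_integral)
qed

lemma has_bochner_integral_indep_white_noise_inner:
  fixes e :: "'a \<Rightarrow> real^'n" and f :: "'a \<Rightarrow> real^'p"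
  assumes "indep2 M e f" "white_noise M e s" "white_noise M f t"
  shows "has_bochner_integral M (\<lambda>w. (B *v e w) \<bullet> (C *v f w)) 0"
  using has_bochner_integral_inner_matrix_vector_mult[of M e f "\<lambda>_ _. 0" B C]
  by (simp add: has_bochner_integral_indep_white_noise_product[OF assms])

lemma indep_set_of_indep_sets:
  assumes "indep_sets F I" "i \<in> I" "j \<in> I" "i \<noteq> j"
  shows "indep_set (F i) (F j)"
proof (rule indep_setI)
  show "F i \<subseteq> events" "F j \<subseteq> events"
    using assms unfolding indep_sets_def by auto
  fix a b assume "a \<in> F i" "b \<in> F j"
  then have "prob (\<Inter>k\<in>{i, j}. if k = i then a else b) = (\<Prod>k\<in>{i, j}. prob (if k = i then a else b))"
    using assms by (intro indep_setsD[OF assms(1)]) auto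
  then show "prob (a \<inter> b) = prob a * prob b"
    using assms(4) by (simp add: Int_commute)
qed

lemma indep3_indep2:
  assumes "indep3 M X Y Z"
  shows "indep2 M X Y" "indep2 M X Z" "indep2 M Y Z"
proof -
  let ?F = "\<lambda>i::nat. if i = 0 then gen_sigma M X else if i = 1 then gen_sigma M Y else gen_sigma M Z"
  have indep: "indep_sets ?F {0, 1, 2}"
    using assms by (simp add: indep3_def)
  have "indep_set (gen_sigma M X) (gen_sigma M Y)" "indep_set (gen_sigma M X) (gen_sigma M Z)"
    "indep_set (gen_sigma M Y) (gen_sigma M Z)"
    using indep_set_of_indep_sets[OF indep, of 0 1] indep_set_of_indep_sets[OF indep, of 0 2]
      indep_set_of_indep_sets[OF indep, of 1 2]
    by simp_all
  with assms show "indep2 M X Y" "indep2 M X Z" "indep2 M Y Z"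
    by (simp_all add: indep2_def indep3_def)
qed

lemma has_bochner_integral_indep3_white_noise_sum:
  fixes e0 :: "'a \<Rightarrow> real^'n0" and e1 :: "'a \<Rightarrow> real^'n1" and e2 :: "'a \<Rightarrow> real^'n2"
    and B0 :: "real^'n0^'m" and B1 :: "real^'n1^'m" and B2 :: "real^'n2^'m"
  assumes "indep3 M e0 e1 e2"
    and "white_noise M e0 s0" "white_noise M e1 s1" "white_noise M e2 s2"
  defines "u \<equiv> \<lambda>w. B0 *v e0 w + B1 *v e1 w + B2 *v e2 w"
  shows "has_bochner_integral M (\<lambda>w. u w \<bullet> u w)
    (s0\<^sup>2 * trace (transpose B0 ** B0) + s1\<^sup>2 * trace (transpose B1 ** B1)
      + s2\<^sup>2 * trace (transpose B2 ** B2))"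
proof -
  note indep = indep3_indep2[OF assms(1)]
  let ?a = "\<lambda>w. B0 *v e0 w" and ?b = "\<lambda>w. B1 *v e1 w" and ?c = "\<lambda>w. B2 *v e2 w"
  have "has_bochner_integral M
      (\<lambda>w. ?a w \<bullet> ?a w + ?b w \<bullet> ?b w + ?c w \<bullet> ?c w
        + 2 * (?a w \<bullet> ?b w) + 2 * (?a w \<bullet> ?c w) + 2 * (?b w \<bullet> ?c w))
      (s0\<^sup>2 * trace (transpose B0 ** B0) + s1\<^sup>2 * trace (transpose B1 ** B1)
        + s2\<^sup>2 * trace (transpose B2 ** B2) + 2 * 0 + 2 * 0 + 2 * 0)"
    using assms(2-4)
    by (intro has_bochner_integral_add has_bochner_integral_mult_right
        has_bochner_integral_white_noise_quadratic_form
        has_bochner_integral_indep_white_noise_inner[OF indep(1)]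
        has_bochner_integral_indep_white_noise_inner[OF indep(2)]
        has_bochner_integral_indep_white_noise_inner[OF indep(3)])
  moreover have "u w \<bullet> u w = ?a w \<bullet> ?a w + ?b w \<bullet> ?b w + ?c w \<bullet> ?c w
      + 2 * (?a w \<bullet> ?b w) + 2 * (?a w \<bullet> ?c w) + 2 * (?b w \<bullet> ?c w)" for w
    by (simp add: u_def inner_add_left inner_add_right inner_commute)
  ultimately show ?thesis
    by simp
qed

end

theorem proposition2:
  fixes M :: "'a measure"
    and Z0 :: "real^'m0^'n0" and X0 :: "real^'k^'n0"
    and W1 :: "real^'k1^'n1" and X1 :: "real^'k^'n1"
    and \<alpha>0 :: "real^'m0" and \<alpha>1 :: "real^'k1" and \<beta>0 :: "real^'k"
    and \<epsilon>0 :: "'a \<Rightarrow> real^'n0" and \<epsilon>1 :: "'a \<Rightarrow> real^'n1" and \<eta> :: "'a \<Rightarrow> real^'k"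
    and \<sigma>0 \<sigma>1 \<sigma>\<eta> :: real
    and y0 :: "'a \<Rightarrow> real^'n0" and y1 :: "'a \<Rightarrow> real^'n1"
  assumes P: "prob_space M"
    and invZ: "invertible (transpose Z0 ** Z0)"
    and invW: "invertible (transpose W1 ** W1)"
    and invX0: "invertible (transpose (resid_maker Z0 ** X0) ** (resid_maker Z0 ** X0))"
    and wn0: "white_noise M \<epsilon>0 \<sigma>0"
    and wn1: "white_noise M \<epsilon>1 \<sigma>1"
    and wn\<eta>: "white_noise M \<eta> \<sigma>\<eta>"
    and ind: "indep3 M \<epsilon>0 \<epsilon>1 \<eta>"
    and y0_def: "\<And>w. y0 w = Z0 *v \<alpha>0 + X0 *v \<beta>0 + \<epsilon>0 w"
    and y1_def: "\<And>w. y1 w = W1 *v \<alpha>1 + X1 *v (\<beta>0 + \<eta> w) + \<epsilon>1 w"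
  shows
    "(let M0 = resid_maker Z0; Xt0 = M0 ** X0;
          M1 = resid_maker W1; Xt1 = M1 ** X1;
          \<beta>hat0 = (\<lambda>w. (matrix_inv (transpose Xt0 ** Xt0) ** transpose Xt0) *v y0 w);
          \<alpha>hat1 = (\<lambda>w. (matrix_inv (transpose W1 ** W1) ** transpose W1) *v (y1 w - X1 *v \<beta>hat0 w));
          yhat = (\<lambda>w. W1 *v \<alpha>hat1 w + X1 *v \<beta>hat0 w);
          n1 = real CARD('n1); k1 = real CARD('k1)
      in (1 / n1) * integral\<^sup>L M (\<lambda>w. (y1 w - yhat w) \<bullet> (y1 w - yhat w))
         = (n1 - k1) / n1 * \<sigma>1\<^sup>2
           + \<sigma>\<eta>\<^sup>2 / n1 * trace (transpose Xt1 ** Xt1)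
           + \<sigma>0\<^sup>2 / n1 * trace (matrix_inv (transpose Xt0 ** Xt0) ** (transpose Xt1 ** Xt1)))"
proof -
  interpret prob_space M by (rule P)
  let ?Xt0 = "resid_maker Z0 ** X0" and ?Xt1 = "resid_maker W1 ** X1"
  let ?A = "partial_ls_operator Z0 X0"
  let ?\<beta>hat0 = "\<lambda>w. (matrix_inv (transpose ?Xt0 ** ?Xt0) ** transpose ?Xt0) *v y0 w"
  let ?yhat = "\<lambda>w. W1 *v ((matrix_inv (transpose W1 ** W1) ** transpose W1) *v (y1 w - X1 *v ?\<beta>hat0 w))
    + X1 *v ?\<beta>hat0 w"
  have estimate: "?\<beta>hat0 w = \<beta>0 + ?A *v \<epsilon>0 w" for w
    using partial_ls_operator_unbiased[OF invZ invX0] by (simp add: y0_def partial_ls_operator_def)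
  have error: "y1 w - ?yhat w
      = (- (?Xt1 ** ?A)) *v \<epsilon>0 w + resid_maker W1 *v \<epsilon>1 w + ?Xt1 *v \<eta> w" for w
    using refit_prediction_error[OF invW, where X = X1 and \<alpha> = \<alpha>1 and \<beta> = \<beta>0 and h = "\<eta> w"
        and e = "\<epsilon>1 w" and d = "?A *v \<epsilon>0 w"]
    by (simp add: estimate y1_def matrix_vector_mul_assoc matrix_vector_mult_uminus_left)
  have "has_bochner_integral M (\<lambda>w. (y1 w - ?yhat w) \<bullet> (y1 w - ?yhat w))
      (\<sigma>0\<^sup>2 * trace (matrix_inv (transpose ?Xt0 ** ?Xt0) ** (transpose ?Xt1 ** ?Xt1))
        + \<sigma>1\<^sup>2 * (real CARD('n1) - real CARD('k1)) + \<sigma>\<eta>\<^sup>2 * trace (transpose ?Xt1 ** ?Xt1))"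
    using has_bochner_integral_indep3_white_noise_sum[OF ind wn0 wn1 wn\<eta>,
        of "- (?Xt1 ** ?A)" "resid_maker W1" ?Xt1]
    by (simp add: error transpose_uminus_mult_self trace_transpose_mult_self_mult
        partial_ls_operator_mult_transpose[OF invZ invX0] resid_maker_symmetric[OF invW]
        resid_maker_idempotent[OF invW] trace_resid_maker[OF invW])
  then show ?thesis
    by (simp add: Let_def has_bochner_integral_integral_eq field_simps)
qed

end
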